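(* Let $d\ge 1$ and let $\Phi_1,\dots,\Phi_N:\mathcal L(\mathbb C^d)\to\mathcal L(\mathbb C^d)$ be quantum channels. Suppose there exist orthonormal bases $\mathbf e^{(1)},\dots,\mathbf e^{(N)}$ of $\mathbb C^d$ such that the value of the semidefinite program $$\min\Big\{\operatorname{Tr} H \;:\; H \text{ Hermitian on } \mathbb C^d\otimes\mathbb C^d,\ H\ge G_{\Phi_i,\mathbf e^{(i)}}\ \text{for all } i\in[N]\Big\}$$ is strictly larger than $d$. Then the $N$-tuple $(\Phi_1,\dots,\Phi_N)$ is incompatible.
   Context: A quantum channel is a completely positive trace-preserving linear map; $\Phi^*$ denotes its adjoint with respect to the Hilbert–Schmidt inner product $\langle X,Y\rangle=\operatorname{Tr}(X^*Y)$. Channels $\Phi_1,\dots,\Phi_N:\mathcal L(\mathbb C^d)\to\mathcal L(\mathbb C^d)$ are compatible if there is a channel $\Lambda:\mathcal L(\mathbb C^d)\to\mathcal L((\mathbb C^d)^{\otimes N})$ whose marginals are the $\Phi_i$, i.e. $\Phi_i(X)$ equals the partial trace of $\Lambda(X)$ over all tensor factors except the $i$-th, for every $X$; otherwise they are incompatible. For an operator $X=\sum_{i,j}X_{ij}|i\rangle\langle j|$ on $\mathbb C^d$, let $|X\rangle:=\sum_{i,j}X_{ij}|i\rangle\otimes|j\rangle\in\mathbb C^d\otimes\mathbb C^d$. For a channel $\Phi$ on $\mathcal L(\mathbb C^d)$ and an orthonormal basis $\mathbf e=(e_i)_{i=1}^d$, define $$G_{\Phi,\mathbf e}:=\sum_{i=1}^d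 \frac{|\Phi^*(|e_i\rangle\langle e_i|)\rangle\langle\Phi^*(|e_i\rangle\langle e_i|)|}{\operatorname{Tr}\Phi^*(|e_i\rangle\langle e_i|)},$$ where terms with zero denominator are omitted. $H\ge G$ is the positive semidefinite order. *)

theory Defs
  imports Complex_Main "Jordan_Normal_Form.Matrix"
begin

text \<open>Operators on C^n are complex n x n matrices (type complex mat, with carrier_mat n n).
  A linear map L(C^n) -> L(C^m) is a function complex mat => complex mat, considered on
  carrier_mat n n only.\<close>

definition mtrace :: "complex mat \<Rightarrow> complex" where
  "mtrace A = (\<Sum>i<dim_row A. A $$ (i, i))"

definition cadj :: "complex mat \<Rightarrow> complex mat" where
  "cadj A = mat (dim_col A) (dim_row A) (\<lambda>(i, j). cnj (A $$ (j, i)))"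

definition cinner :: "complex vec \<Rightarrow> complex vec \<Rightarrow> complex" where
  "cinner v w = (\<Sum>i<dim_vec v. cnj (v $ i) * w $ i)"

definition hermitian_mat :: "nat \<Rightarrow> complex mat \<Rightarrow> bool" where
  "hermitian_mat n A \<longleftrightarrow> A \<in> carrier_mat n n \<and> cadj A = A"

definition psd_mat :: "nat \<Rightarrow> complex mat \<Rightarrow> bool" where
  "psd_mat n A \<longleftrightarrow> hermitian_mat n A \<and>
     (\<forall>v \<in> carrier_vec n. 0 \<le> Re (cinner v (A *\<^sub>v v)))"

definition loewner_ge :: "nat \<Rightarrow> complex mat \<Rightarrow> complex mat \<Rightarrow> bool" where
  "loewner_ge n H G \<longleftrightarrow> H \<in> carrier_mat n n \<and> G \<in> carrier_mat n n \<and> psd_mat n (H - G)"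

definition linear_op_map :: "nat \<Rightarrow> nat \<Rightarrow> (complex mat \<Rightarrow> complex mat) \<Rightarrow> bool" where
  "linear_op_map n m \<Phi> \<longleftrightarrow>
     (\<forall>X \<in> carrier_mat n n. \<Phi> X \<in> carrier_mat m m) \<and>
     (\<forall>X \<in> carrier_mat n n. \<forall>Y \<in> carrier_mat n n. \<Phi> (X + Y) = \<Phi> X + \<Phi> Y) \<and>
     (\<forall>X \<in> carrier_mat n n. \<forall>c. \<Phi> (c \<cdot>\<^sub>m X) = c \<cdot>\<^sub>m \<Phi> X)"

text \<open>Block (a,b) (of size n x n) of a (k*n) x (k*n) matrix, i.e. C^k (x) C^n with the
  C^k index most significant.\<close>
definition block_of :: "nat \<Rightarrow> nat \<Rightarrow> nat \<Rightarrow> complex mat \<Rightarrow> complex mat" where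
  "block_of n a b X = mat n n (\<lambda>(r, s). X $$ (a * n + r, b * n + s))"

text \<open>(id_k (x) Phi)(X) for Phi : L(C^n) -> L(C^m), X on C^k (x) C^n.\<close>
definition ampliate :: "nat \<Rightarrow> nat \<Rightarrow> nat \<Rightarrow> (complex mat \<Rightarrow> complex mat) \<Rightarrow> complex mat \<Rightarrow> complex mat" where
  "ampliate k n m \<Phi> X = mat (k * m) (k * m)
     (\<lambda>(p, q). \<Phi> (block_of n (p div m) (q div m) X) $$ (p mod m, q mod m))"

definition completely_positive :: "nat \<Rightarrow> nat \<Rightarrow> (complex mat \<Rightarrow> complex mat) \<Rightarrow> bool" where
  "completely_positive n m \<Phi> \<longleftrightarrow>
     (\<forall>k X. psd_mat (k * n) X \<longrightarrow> psd_mat (k * m) (ampliate k n m \<Phi> X))"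

definition trace_preserving :: "nat \<Rightarrow> (complex mat \<Rightarrow> complex mat) \<Rightarrow> bool" where
  "trace_preserving n \<Phi> \<longleftrightarrow> (\<forall>X \<in> carrier_mat n n. mtrace (\<Phi> X) = mtrace X)"

definition quantum_channel :: "nat \<Rightarrow> nat \<Rightarrow> (complex mat \<Rightarrow> complex mat) \<Rightarrow> bool" where
  "quantum_channel n m \<Phi> \<longleftrightarrow>
     linear_op_map n m \<Phi> \<and> completely_positive n m \<Phi> \<and> trace_preserving n \<Phi>"

definition mat_unit :: "nat \<Rightarrow> nat \<Rightarrow> nat \<Rightarrow> complex mat" where
  "mat_unit n a b = mat n n (\<lambda>(i, j). if i = a \<and> j = b then 1 else 0)"

text \<open>Hilbert-Schmidt adjoint of Phi : L(C^n) -> L(C^m):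
  the entry (a,b) of Phi^*(Y) is <E_ab, Phi^*(Y)> = <Phi(E_ab), Y> = Tr(Phi(E_ab)^* Y).\<close>
definition hs_adjoint :: "nat \<Rightarrow> (complex mat \<Rightarrow> complex mat) \<Rightarrow> complex mat \<Rightarrow> complex mat" where
  "hs_adjoint n \<Phi> Y = mat n n (\<lambda>(a, b). mtrace (cadj (\<Phi> (mat_unit n a b)) * Y))"

text \<open>|X> = sum_{ij} X_ij e_i (x) e_j, with index i*d + j.\<close>
definition vectorize :: "nat \<Rightarrow> complex mat \<Rightarrow> complex vec" where
  "vectorize d X = vec (d * d) (\<lambda>k. X $$ (k div d, k mod d))"

definition ketbra :: "complex vec \<Rightarrow> complex vec \<Rightarrow> complex mat" where
  "ketbra v w = mat (dim_vec v) (dim_vec w) (\<lambda>(i, j). v $ i * cnj (w $ j))"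

definition orthonormal_basis :: "nat \<Rightarrow> (nat \<Rightarrow> complex vec) \<Rightarrow> bool" where
  "orthonormal_basis d e \<longleftrightarrow>
     (\<forall>i < d. e i \<in> carrier_vec d) \<and>
     (\<forall>i < d. \<forall>j < d. cinner (e i) (e j) = (if i = j then 1 else 0))"

definition G_mat :: "nat \<Rightarrow> (complex mat \<Rightarrow> complex mat) \<Rightarrow> (nat \<Rightarrow> complex vec) \<Rightarrow> complex mat" where
  "G_mat d \<Phi> e = mat (d * d) (d * d) (\<lambda>(p, q).
     \<Sum>i \<in> {i. i < d \<and> mtrace (hs_adjoint d \<Phi> (ketbra (e i) (e i))) \<noteq> 0}.
       (let P = hs_adjoint d \<Phi> (ketbra (e i) (e i))
        in ketbra (vectorize d P) (vectorize d P) $$ (p, q) / mtrace P))"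

text \<open>Digit k (k = 0 .. N-1, factor 0 most significant) of an index j < d^N
  of (C^d)^{(x)N}.\<close>
definition digit :: "nat \<Rightarrow> nat \<Rightarrow> nat \<Rightarrow> nat \<Rightarrow> nat" where
  "digit d N k j = (j div d ^ (N - Suc k)) mod d"

text \<open>Partial trace of Y on (C^d)^{(x)N} over all tensor factors except the i-th.\<close>
definition ptrace_keep :: "nat \<Rightarrow> nat \<Rightarrow> nat \<Rightarrow> complex mat \<Rightarrow> complex mat" where
  "ptrace_keep d N i Y = mat d d (\<lambda>(a, b).
     \<Sum>(j, j') \<in> {(j, j'). j < d ^ N \<and> j' < d ^ N \<and> digit d N i j = a \<and> digit d N i j' = b \<and>
                      (\<forall>k < N. k \<noteq> i \<longrightarrow> digit d N k j = digit d N k j')}.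
        Y $$ (j, j'))"

definition compatible :: "nat \<Rightarrow> nat \<Rightarrow> (nat \<Rightarrow> complex mat \<Rightarrow> complex mat) \<Rightarrow> bool" where
  "compatible d N \<Phi> \<longleftrightarrow>
     (\<exists>\<Lambda>. quantum_channel d (d ^ N) \<Lambda> \<and>
          (\<forall>i < N. \<forall>X \<in> carrier_mat d d. \<Phi> i X = ptrace_keep d N i (\<Lambda> X)))"

end

theory Submission
  imports Defs "Jordan_Normal_Form.Determinant"
begin

(* Suppose Lambda is a joint channel with marginals Phi_i. Pull back the product basis
   t_j = e^(1)_(j_1) (x) ... (x) e^(N)_(j_N): the operators B_j = Lambda^*(|t_j><t_j|) are positive,
   and since the adjoint of a partial trace tensors with identities,
   Phi_i^*(|e^(i)_a><e^(i)_a|) = sum of B_j over all j with j_i = a.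
   Merging terms can only decrease sum_j |x_j><x_j| / t_j (Cauchy-Schwarz), so
   H = sum_j |B_j><B_j| / Tr B_j dominates every G_(Phi_i, e^(i)). On the other hand
   ||B_j||_2^2 <= (Tr B_j)^2 for positive B_j, so
   Tr H <= sum_j Tr B_j = Tr Phi_1^*(I) = d by trace preservation.
   Thus H is feasible for the SDP and has trace at most d. *)

section \<open>Quadratic forms and positive semidefinite matrices\<close>

lemma mtrace_carrier: "M \<in> carrier_mat n n \<Longrightarrow> mtrace M = (\<Sum>a<n. M $$ (a, a))"
  by (simp add: mtrace_def)

lemma mtrace_cadj_mult:
  assumes "M \<in> carrier_mat n n" "Y \<in> carrier_mat n n"
  shows "mtrace (cadj M * Y) = (\<Sum>(q, p)\<in>{..<n} \<times> {..<n}. cnj (M $$ (q, p)) * Y $$ (q, p))"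
proof -
  have "mtrace (cadj M * Y) = (\<Sum>p<n. \<Sum>q<n. cnj (M $$ (q, p)) * Y $$ (q, p))"
    using assms by (auto simp: mtrace_def cadj_def scalar_prod_def atLeast0LessThan intro!: sum.cong)
  also have "\<dots> = (\<Sum>q<n. \<Sum>p<n. cnj (M $$ (q, p)) * Y $$ (q, p))"
    by (rule sum.swap)
  finally show ?thesis by (simp add: sum.cartesian_product)
qed

lemma mtrace_cadj_mult_swap:
  assumes "A \<in> carrier_mat n n" "B \<in> carrier_mat n n"
  shows "mtrace (cadj A * B) = cnj (mtrace (cadj B * A))"
  unfolding mtrace_cadj_mult[OF assms] mtrace_cadj_mult[OF assms(2,1)] cnj_sum
  by (intro sum.cong refl) (clarsimp simp: mult.commute)

lemma cinner_mult_mat_vec: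
  assumes "v \<in> carrier_vec n" "M \<in> carrier_mat n n"
  shows "cinner v (M *\<^sub>v v) = (\<Sum>a<n. \<Sum>b<n. cnj (v $ a) * M $$ (a, b) * v $ b)"
  using assms
  by (auto simp: cinner_def mult_mat_vec_def scalar_prod_def sum_distrib_left mult.assoc atLeast0LessThan
      intro!: sum.cong)

lemma cinner_eq_mtrace_ketbra:
  assumes "w \<in> carrier_vec n" "A \<in> carrier_mat n n"
  shows "cinner w (A *\<^sub>v w) = mtrace (cadj (ketbra w w) * A)"
proof -
  have K: "ketbra w w \<in> carrier_mat n n" using assms(1) by (simp add: ketbra_def)
  show ?thesis
    unfolding mtrace_cadj_mult[OF K assms(2)] cinner_mult_mat_vec[OF assms] sum.cartesian_product[symmetric]
    using assms(1) by (intro sum.cong refl) (simp add: ketbra_def mult_ac)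
qed

lemma cinner_minus_mat:
  assumes "A \<in> carrier_mat n n" "B \<in> carrier_mat n n" "v \<in> carrier_vec n"
  shows "cinner v ((A - B) *\<^sub>v v) = cinner v (A *\<^sub>v v) - cinner v (B *\<^sub>v v)"
proof -
  have "cinner v ((A - B) *\<^sub>v v) = (\<Sum>a<n. \<Sum>b<n. cnj (v $ a) * (A - B) $$ (a, b) * v $ b)"
    by (rule cinner_mult_mat_vec[OF assms(3)]) (rule minus_carrier_mat[OF assms(2)])
  also have "\<dots> = (\<Sum>a<n. \<Sum>b<n. cnj (v $ a) * A $$ (a, b) * v $ b - cnj (v $ a) * B $$ (a, b) * v $ b)"
    using assms by (intro sum.cong refl) (simp add: algebra_simps)
  also have "\<dots> = cinner v (A *\<^sub>v v) - cinner v (B *\<^sub>v v)"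
    by (simp add: sum_subtractf cinner_mult_mat_vec[OF assms(3)] assms(1,2))
  finally show ?thesis .
qed

lemma cinner_unit_vec_form:
  assumes "M \<in> carrier_mat n n" "a < n"
  shows "cinner (unit_vec n a) (M *\<^sub>v unit_vec n a) = M $$ (a, a)"
proof -
  have "cinner (unit_vec n a) (M *\<^sub>v unit_vec n a)
      = (\<Sum>x<n. \<Sum>y<n. cnj (unit_vec n a $ x) * M $$ (x, y) * unit_vec n a $ y)"
    by (rule cinner_mult_mat_vec[OF unit_vec_carrier assms(1)])
  also have "\<dots> = (\<Sum>x<n. \<Sum>y<n. if y = a then (if x = a then M $$ (a, a) else 0) else 0)"
    using assms(2) by (intro sum.cong refl) auto
  also have "\<dots> = M $$ (a, a)"
    using assms(2) by simp
  finally show ?thesis .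
qed

lemma cinner_two_point_form:
  assumes M: "M \<in> carrier_mat n n" and ab: "a < n" "b < n" "a \<noteq> b"
    and v: "v = vec n (\<lambda>x. if x = a then \<alpha> else if x = b then \<beta> else 0)"
  shows "cinner v (M *\<^sub>v v) = cnj \<alpha> * \<alpha> * M $$ (a, a) + cnj \<alpha> * \<beta> * M $$ (a, b)
           + cnj \<beta> * \<alpha> * M $$ (b, a) + cnj \<beta> * \<beta> * M $$ (b, b)"
proof -
  have sum_ab: "(\<Sum>x<n. g x) = g a + g b"
    if "\<And>x. x < n \<Longrightarrow> x \<noteq> a \<Longrightarrow> x \<noteq> b \<Longrightarrow> g x = 0" for g :: "nat \<Rightarrow> complex"
  proof -
    have "(\<Sum>x<n. g x) = (\<Sum>x\<in>{a, b}. g x)"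
      using that ab by (intro sum.mono_neutral_right) auto
    then show ?thesis using ab(3) by simp
  qed
  have va: "v $ a = \<alpha>" "v $ b = \<beta>" and v0: "\<And>x. x < n \<Longrightarrow> x \<noteq> a \<Longrightarrow> x \<noteq> b \<Longrightarrow> v $ x = 0"
    using ab by (auto simp: v)
  have inner: "(\<Sum>y<n. cnj (v $ x) * M $$ (x, y) * v $ y)
      = cnj (v $ x) * M $$ (x, a) * \<alpha> + cnj (v $ x) * M $$ (x, b) * \<beta>" for x
    by (subst sum_ab) (auto simp: v0 va)
  have "cinner v (M *\<^sub>v v) = (\<Sum>x<n. cnj (v $ x) * M $$ (x, a) * \<alpha> + cnj (v $ x) * M $$ (x, b) * \<beta>)"
    using cinner_mult_mat_vec[OF _ M, of v] by (simp only: inner) (simp add: v)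
  also have "\<dots> = (cnj \<alpha> * M $$ (a, a) * \<alpha> + cnj \<alpha> * M $$ (a, b) * \<beta>)
      + (cnj \<beta> * M $$ (b, a) * \<alpha> + cnj \<beta> * M $$ (b, b) * \<beta>)"
    by (subst sum_ab) (auto simp: v0 va)
  finally show ?thesis by (simp add: algebra_simps)
qed

lemma hermitian_mat_entry:
  assumes "hermitian_mat n M" "a < n" "b < n"
  shows "M $$ (b, a) = cnj (M $$ (a, b))"
proof -
  have M: "M \<in> carrier_mat n n" "cadj M = M" using assms by (auto simp: hermitian_mat_def)
  have "M $$ (b, a) = cadj M $$ (b, a)" using M by simp
  also have "\<dots> = cnj (M $$ (a, b))" using M(1) assms(2,3) by (simp add: cadj_def)
  finally show ?thesis .
qed

lemma hermitian_form_real: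
  assumes "hermitian_mat n M" "w \<in> carrier_vec n"
  shows "Im (cinner w (M *\<^sub>v w)) = 0"
proof -
  have M: "M \<in> carrier_mat n n" using assms hermitian_mat_def by auto
  have "cnj (cinner w (M *\<^sub>v w)) = (\<Sum>a<n. \<Sum>b<n. w $ a * cnj (M $$ (a, b)) * cnj (w $ b))"
    by (simp add: cinner_mult_mat_vec[OF assms(2) M] cnj_sum)
  also have "\<dots> = (\<Sum>a<n. \<Sum>b<n. w $ a * M $$ (b, a) * cnj (w $ b))"
  proof (intro sum.cong refl)
    fix a b assume "a \<in> {..<n}" "b \<in> {..<n}"
    then show "w $ a * cnj (M $$ (a, b)) * cnj (w $ b) = w $ a * M $$ (b, a) * cnj (w $ b)"
      using hermitian_mat_entry[OF assms(1), of a b] by simp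
  qed
  also have "\<dots> = (\<Sum>b<n. \<Sum>a<n. cnj (w $ b) * M $$ (b, a) * w $ a)"
    by (subst sum.swap) (simp add: mult_ac)
  also have "\<dots> = cinner w (M *\<^sub>v w)" by (simp add: cinner_mult_mat_vec[OF assms(2) M])
  finally show ?thesis using Reals_cnj_iff complex_is_Real_iff by metis
qed

lemma hermitian_mat_minus:
  assumes "hermitian_mat n A" "hermitian_mat n B"
  shows "hermitian_mat n (A - B)"
proof -
  have c: "A \<in> carrier_mat n n" "B \<in> carrier_mat n n" "cadj A = A" "cadj B = B"
    using assms by (auto simp: hermitian_mat_def)
  have "cadj (A - B) = A - B"
  proof (rule eq_matI)
    fix i j assume "i < dim_row (A - B)" "j < dim_col (A - B)"
    then have ij: "i < n" "j < n" using c by auto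
    have "cadj (A - B) $$ (i, j) = cnj (A $$ (j, i)) - cnj (B $$ (j, i))" using ij c by (simp add: cadj_def)
    also have "\<dots> = cadj A $$ (i, j) - cadj B $$ (i, j)" using ij c(1,2) by (simp add: cadj_def)
    also have "\<dots> = (A - B) $$ (i, j)" using ij c by simp
    finally show "cadj (A - B) $$ (i, j) = (A - B) $$ (i, j)" .
  qed (use c in \<open>auto simp: cadj_def\<close>)
  then show ?thesis using c minus_carrier_mat[OF c(2), of A] by (simp add: hermitian_mat_def)
qed

text \<open>Real quadratic forms already force Hermiticity: polarise with the vectors
  \<open>e\<^sub>a + e\<^sub>b\<close> and \<open>e\<^sub>a + \<i> e\<^sub>b\<close>.\<close>
lemma psd_matI:
  assumes M: "M \<in> carrier_mat n n"
    and form: "\<And>v. v \<in> carrier_vec n \<Longrightarrow> Im (cinner v (M *\<^sub>v v)) = 0 \<and> 0 \<le> Re (cinner v (M *\<^sub>v v))"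
  shows "psd_mat n M"
proof -
  have diag: "Im (M $$ (a, a)) = 0" if "a < n" for a
    using form[OF unit_vec_carrier, of a] cinner_unit_vec_form[OF M that] by simp
  have "M $$ (b, a) = cnj (M $$ (a, b))" if ab: "a < n" "b < n" for a b
  proof (cases "a = b")
    case True
    then show ?thesis using diag[OF ab(1)] by (simp add: complex_eq_iff)
  next
    case False
    let ?v = "\<lambda>\<beta>. vec n (\<lambda>x. if x = a then 1 else if x = b then \<beta> else 0)"
    have "Im (M $$ (a, b)) + Im (M $$ (b, a)) = 0"
      using form[of "?v 1"] cinner_two_point_form[OF M ab False refl, of 1 1] diag ab by simp
    moreover have "Re (M $$ (a, b)) - Re (M $$ (b, a)) = 0"
      using form[of "?v \<i>"] cinner_two_point_form[OF M ab False refl, of 1 \<i>] diag ab by simp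
    ultimately show ?thesis by (simp add: complex_eq_iff)
  qed
  note herm = this
  have "cadj M $$ (i, j) = M $$ (i, j)" if "i < n" "j < n" for i j
    using herm[OF that] M that by (simp add: cadj_def)
  then have "cadj M = M" using M by (auto simp: cadj_def intro!: eq_matI)
  then show ?thesis using M form by (simp add: psd_mat_def hermitian_mat_def)
qed

lemma psd_mat_diag:
  assumes "psd_mat n M" "a < n"
  shows "M $$ (a, a) = of_real (Re (M $$ (a, a)))" "0 \<le> Re (M $$ (a, a))"
proof -
  have H: "hermitian_mat n M" and M: "M \<in> carrier_mat n n"
    using assms(1) by (auto simp: psd_mat_def hermitian_mat_def)
  have "Im (M $$ (a, a)) = Im (cnj (M $$ (a, a)))"
    using arg_cong[OF hermitian_mat_entry[OF H assms(2) assms(2)], of Im] .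
  then show "M $$ (a, a) = of_real (Re (M $$ (a, a)))" by (simp add: complex_eq_iff)
  have "0 \<le> Re (cinner (unit_vec n a) (M *\<^sub>v unit_vec n a))"
    using assms(1) by (simp add: psd_mat_def)
  then show "0 \<le> Re (M $$ (a, a))"
    using cinner_unit_vec_form[OF M assms(2)] by simp
qed

lemma quadratic_nonneg_imp_le:
  fixes p r s :: real
  assumes "0 \<le> p" "0 \<le> r" "0 \<le> s" "\<And>t. 0 \<le> t * t * p - 2 * t * s + s * r"
  shows "s \<le> p * r"
proof (cases "p > 0")
  case True
  have "0 \<le> (s / p) * (s / p) * p - 2 * (s / p) * s + s * r" by (rule assms(4))
  also have "\<dots> = s * r - s * s / p" using True by (simp add: field_simps power2_eq_square)
  finally have "s * s \<le> s * (p * r)" using True by (simp add: field_simps)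
  then show ?thesis using assms(3) mult_le_cancel_left_pos[of s s "p * r"]
    by (cases "s = 0") (auto simp: assms(1,2))
next
  case False
  then have "p = 0" using assms(1) by simp
  have "0 \<le> (r + 1) * (r + 1) * p - 2 * (r + 1) * s + s * r" by (rule assms(4))
  then have "s * (r + 2) \<le> 0" using \<open>p = 0\<close> by (simp add: algebra_simps)
  then have "s = 0" using assms(2,3) mult_pos_pos[of s "r + 2"] by linarith
  then show ?thesis using assms by simp
qed

lemma psd_mat_entry_bound:
  assumes "psd_mat n M" "a < n" "b < n"
  shows "(cmod (M $$ (a, b)))\<^sup>2 \<le> Re (M $$ (a, a)) * Re (M $$ (b, b))"
proof (cases "a = b")
  case True
  have "cmod (M $$ (a, a)) = \<bar>Re (M $$ (a, a))\<bar>"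
    using psd_mat_diag(1)[OF assms(1,2)] by (metis norm_of_real)
  then show ?thesis using True by (simp add: power2_eq_square)
next
  case False
  have H: "hermitian_mat n M" and M: "M \<in> carrier_mat n n"
    and form: "\<And>w. w \<in> carrier_vec n \<Longrightarrow> 0 \<le> Re (cinner w (M *\<^sub>v w))"
    using assms(1) by (auto simp: psd_mat_def hermitian_mat_def)
  define c where "c = M $$ (a, b)"
  have ba: "M $$ (b, a) = cnj c" using hermitian_mat_entry[OF H assms(2,3)] c_def by simp
  have cc: "c * cnj c = of_real ((cmod c)\<^sup>2)" "cnj c * c = of_real ((cmod c)\<^sup>2)"
    using complex_norm_square[of c] by (auto simp: mult.commute)
  show ?thesis
  proof (rule quadratic_nonneg_imp_le)
    fix t :: real
    let ?v = "vec n (\<lambda>x. if x = a then of_real t else if x = b then - cnj c else 0)"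
    have "cinner ?v (M *\<^sub>v ?v) = of_real t * of_real t * M $$ (a, a) - of_real t * (cnj c * c)
        - of_real t * (c * cnj c) + (c * cnj c) * M $$ (b, b)"
      by (subst cinner_two_point_form[OF M assms(2,3) False refl]) (simp add: ba c_def algebra_simps)
    also have "\<dots> = of_real (t * t * Re (M $$ (a, a)) - 2 * t * (cmod c)\<^sup>2 + (cmod c)\<^sup>2 * Re (M $$ (b, b)))"
      by (subst psd_mat_diag(1)[OF assms(1,2)], subst psd_mat_diag(1)[OF assms(1,3)], simp only: cc) simp
    finally show "0 \<le> t * t * Re (M $$ (a, a)) - 2 * t * (cmod (M $$ (a, b)))\<^sup>2
        + (cmod (M $$ (a, b)))\<^sup>2 * Re (M $$ (b, b))"
      using form[of ?v] by (simp add: c_def)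
  qed (use psd_mat_diag(2)[OF assms(1,2)] psd_mat_diag(2)[OF assms(1,3)] in auto)
qed

lemma psd_mat_trace:
  assumes "psd_mat n M"
  shows "mtrace M = of_real (Re (mtrace M))" "0 \<le> Re (mtrace M)"
proof -
  have M: "M \<in> carrier_mat n n" using assms by (simp add: psd_mat_def hermitian_mat_def)
  have "mtrace M = (\<Sum>a<n. of_real (Re (M $$ (a, a))))"
    using psd_mat_diag(1)[OF assms] by (simp add: mtrace_carrier[OF M])
  then show "mtrace M = of_real (Re (mtrace M))" by (simp flip: of_real_sum)
  show "0 \<le> Re (mtrace M)"
    using psd_mat_diag(2)[OF assms] by (auto simp: mtrace_carrier[OF M] Re_sum intro!: sum_nonneg)
qed

lemma psd_mat_frobenius_le:
  assumes "psd_mat n M"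
  shows "(\<Sum>a<n. \<Sum>b<n. (cmod (M $$ (a, b)))\<^sup>2) \<le> (Re (mtrace M))\<^sup>2"
proof -
  have M: "M \<in> carrier_mat n n" using assms by (simp add: psd_mat_def hermitian_mat_def)
  have "(\<Sum>a<n. \<Sum>b<n. (cmod (M $$ (a, b)))\<^sup>2) \<le> (\<Sum>a<n. \<Sum>b<n. Re (M $$ (a, a)) * Re (M $$ (b, b)))"
    by (intro sum_mono psd_mat_entry_bound[OF assms]) auto
  also have "\<dots> = (Re (mtrace M))\<^sup>2"
    by (simp add: mtrace_carrier[OF M] Re_sum power2_eq_square sum_product)
  finally show ?thesis .
qed

lemma psd_mat_trace_zero:
  assumes "psd_mat n M" "mtrace M = 0" "a < n" "b < n"
  shows "M $$ (a, b) = 0"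
proof -
  have M: "M \<in> carrier_mat n n" using assms by (simp add: psd_mat_def hermitian_mat_def)
  have "(\<Sum>a<n. Re (M $$ (a, a))) = 0" using assms(2) by (simp add: mtrace_carrier[OF M] flip: Re_sum)
  then have "\<forall>a\<in>{..<n}. Re (M $$ (a, a)) = 0"
    using psd_mat_diag(2)[OF assms(1)] by (subst sum_nonneg_eq_0_iff[symmetric]) auto
  then have "(cmod (M $$ (a, b)))\<^sup>2 \<le> 0" using psd_mat_entry_bound[OF assms(1,3,4)] assms by simp
  then show ?thesis by simp
qed

lemma psd_mat_ketbra:
  assumes "v \<in> carrier_vec n"
  shows "psd_mat n (ketbra v v)"
proof (rule psd_matI)
  show "ketbra v v \<in> carrier_mat n n" using assms by (simp add: ketbra_def)
  fix w :: "complex vec" assume w: "w \<in> carrier_vec n"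
  have "cinner w (ketbra v v *\<^sub>v w) = (\<Sum>a<n. cnj (w $ a) * v $ a) * (\<Sum>b<n. cnj (v $ b) * w $ b)"
    using assms w by (subst cinner_mult_mat_vec[of _ n]) (auto simp: ketbra_def sum_product mult_ac)
  also have "\<dots> = cnj (cinner v w) * cinner v w"
    using assms w by (simp add: cinner_def mult.commute)
  also have "\<dots> = of_real ((cmod (cinner v w))\<^sup>2)"
    by (subst complex_norm_square) (rule mult.commute)
  finally show "Im (cinner w (ketbra v v *\<^sub>v w)) = 0 \<and> 0 \<le> Re (cinner w (ketbra v v *\<^sub>v w))"
    by simp
qed

section \<open>Linear maps and their Hilbert-Schmidt adjoints\<close>

lemma linear_op_map_expand:
  assumes lin: "linear_op_map d m \<Lambda>" and X: "X \<in> carrier_mat d d" and QP: "Q < m" "P < m"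
  shows "\<Lambda> X $$ (Q, P) = (\<Sum>(a, b)\<in>{..<d} \<times> {..<d}. X $$ (a, b) * \<Lambda> (mat_unit d a b) $$ (Q, P))"
proof -
  define R where "R S = mat d d (\<lambda>(a, b). if (a, b) \<in> S then X $$ (a, b) else 0)" for S
  have car: "\<And>Y. Y \<in> carrier_mat d d \<Longrightarrow> \<Lambda> Y \<in> carrier_mat m m"
    and add: "\<And>Y Z. Y \<in> carrier_mat d d \<Longrightarrow> Z \<in> carrier_mat d d \<Longrightarrow> \<Lambda> (Y + Z) = \<Lambda> Y + \<Lambda> Z"
    and smult: "\<And>Y c. Y \<in> carrier_mat d d \<Longrightarrow> \<Lambda> (c \<cdot>\<^sub>m Y) = c \<cdot>\<^sub>m \<Lambda> Y"
    using lin by (auto simp: linear_op_map_def)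
  have R: "R S \<in> carrier_mat d d" for S by (simp add: R_def)
  have E: "mat_unit d a b \<in> carrier_mat d d" for a b by (simp add: mat_unit_def)
  have partial: "\<Lambda> (R S) $$ (Q, P) = (\<Sum>(a, b)\<in>S. X $$ (a, b) * \<Lambda> (mat_unit d a b) $$ (Q, P))"
    if "finite S" for S
    using that
  proof (induction S rule: finite_induct)
    case empty
    have "R {} = 0 \<cdot>\<^sub>m X" using X by (auto simp: R_def intro!: eq_matI)
    then show ?case using smult[OF X] car[OF X] QP by simp
  next
    case (insert x S)
    obtain a b where x: "x = (a, b)" by fastforce
    have "R (insert x S) = R S + X $$ (a, b) \<cdot>\<^sub>m mat_unit d a b"
      using insert(2) x by (auto simp: R_def mat_unit_def intro!: eq_matI)
    then have "\<Lambda> (R (insert x S)) = \<Lambda> (R S) + X $$ (a, b) \<cdot>\<^sub>m \<Lambda> (mat_unit d a b)"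
      using add[OF R] smult[OF E] E by simp
    moreover have "\<Lambda> (R S) \<in> carrier_mat m m" "\<Lambda> (mat_unit d a b) \<in> carrier_mat m m"
      using car[OF R] car[OF E] by auto
    ultimately have "\<Lambda> (R (insert x S)) $$ (Q, P)
        = \<Lambda> (R S) $$ (Q, P) + X $$ (a, b) * \<Lambda> (mat_unit d a b) $$ (Q, P)"
      using QP by simp
    then show ?case using insert x by simp
  qed
  have "R ({..<d} \<times> {..<d}) = X" using X by (auto simp: R_def intro!: eq_matI)
  then show ?thesis using partial[of "{..<d} \<times> {..<d}"] by simp
qed

lemma ampliate_one:
  assumes "X \<in> carrier_mat d d" "\<Lambda> X \<in> carrier_mat m m"
  shows "ampliate 1 d m \<Lambda> X = \<Lambda> X"
proof -
  have "block_of d 0 0 X = X" using assms(1) by (auto simp: block_of_def intro!: eq_matI)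
  then show ?thesis using assms(2) by (auto simp: ampliate_def intro!: eq_matI)
qed

lemma hs_adjoint_carrier[simp]: "hs_adjoint n \<Phi> Y \<in> carrier_mat n n"
  by (simp add: hs_adjoint_def)

lemma hs_adjoint_entry:
  "a < n \<Longrightarrow> b < n \<Longrightarrow> hs_adjoint n \<Phi> Y $$ (a, b) = mtrace (cadj (\<Phi> (mat_unit n a b)) * Y)"
  by (simp add: hs_adjoint_def)

lemma hs_adjoint_duality:
  assumes lin: "linear_op_map d m \<Lambda>" and X: "X \<in> carrier_mat d d" and Y: "Y \<in> carrier_mat m m"
  shows "mtrace (cadj (\<Lambda> X) * Y) = mtrace (cadj X * hs_adjoint d \<Lambda> Y)"
proof -
  let ?I = "{..<d} \<times> {..<d}" and ?J = "{..<m} \<times> {..<m}"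
  let ?t = "\<lambda>a b q p. cnj (X $$ (a, b)) * (cnj (\<Lambda> (mat_unit d a b) $$ (q, p)) * Y $$ (q, p))"
  have LX: "\<Lambda> X \<in> carrier_mat m m" and LE: "\<Lambda> (mat_unit d a b) \<in> carrier_mat m m" for a b
    using lin X by (auto simp: linear_op_map_def mat_unit_def)
  have "mtrace (cadj (\<Lambda> X) * Y) = (\<Sum>(q, p)\<in>?J. cnj (\<Lambda> X $$ (q, p)) * Y $$ (q, p))"
    by (rule mtrace_cadj_mult[OF LX Y])
  also have "\<dots> = (\<Sum>(q, p)\<in>?J. \<Sum>(a, b)\<in>?I. ?t a b q p)"
    by (rule sum.cong[OF refl])
      (auto simp: linear_op_map_expand[OF lin X] cnj_sum sum_distrib_right case_prod_beta mult.assoc)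
  also have "\<dots> = (\<Sum>(a, b)\<in>?I. \<Sum>(q, p)\<in>?J. ?t a b q p)"
    unfolding case_prod_beta by (rule sum.swap)
  also have "\<dots> = (\<Sum>(a, b)\<in>?I. cnj (X $$ (a, b)) * hs_adjoint d \<Lambda> Y $$ (a, b))"
    by (rule sum.cong[OF refl])
      (auto simp: hs_adjoint_entry mtrace_cadj_mult[OF LE Y] sum_distrib_left case_prod_beta)
  also have "\<dots> = mtrace (cadj X * hs_adjoint d \<Lambda> Y)"
    by (rule mtrace_cadj_mult[OF X hs_adjoint_carrier, symmetric])
  finally show ?thesis .
qed

text \<open>\<open>\<langle>v, \<Lambda>\<^sup>*(|f\<rangle>\<langle>f|) v\<rangle>\<close> is the complex conjugate of
  \<open>\<langle>f, \<Lambda>(|v\<rangle>\<langle>v|) f\<rangle>\<close>, and \<open>\<Lambda>(|v\<rangle>\<langle>v|)\<close> is positive.\<close>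
lemma psd_hs_adjoint_ketbra:
  assumes lin: "linear_op_map d m \<Lambda>" and cp: "completely_positive d m \<Lambda>" and f: "f \<in> carrier_vec m"
  shows "psd_mat d (hs_adjoint d \<Lambda> (ketbra f f))"
proof (rule psd_matI)
  show "hs_adjoint d \<Lambda> (ketbra f f) \<in> carrier_mat d d" by simp
  fix v :: "complex vec" assume v: "v \<in> carrier_vec d"
  have V: "ketbra v v \<in> carrier_mat d d" and F: "ketbra f f \<in> carrier_mat m m"
    using v f by (simp_all add: ketbra_def)
  have W: "\<Lambda> (ketbra v v) \<in> carrier_mat m m" using lin V by (simp add: linear_op_map_def)
  have "psd_mat (1 * d) (ketbra v v)" using psd_mat_ketbra[OF v] by simp
  then have "psd_mat (1 * m) (ampliate 1 d m \<Lambda> (ketbra v v))"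
    using cp unfolding completely_positive_def by blast
  then have psd: "psd_mat m (\<Lambda> (ketbra v v))" using ampliate_one[where \<Lambda> = \<Lambda>, OF V W] by simp
  have "cinner v (hs_adjoint d \<Lambda> (ketbra f f) *\<^sub>v v) = mtrace (cadj (ketbra v v) * hs_adjoint d \<Lambda> (ketbra f f))"
    by (rule cinner_eq_mtrace_ketbra[OF v hs_adjoint_carrier])
  also have "\<dots> = mtrace (cadj (\<Lambda> (ketbra v v)) * ketbra f f)"
    by (rule hs_adjoint_duality[OF lin V F, symmetric])
  also have "\<dots> = cnj (mtrace (cadj (ketbra f f) * \<Lambda> (ketbra v v)))"
    by (rule mtrace_cadj_mult_swap[OF W F])
  also have "\<dots> = cnj (cinner f (\<Lambda> (ketbra v v) *\<^sub>v f))"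
    by (simp add: cinner_eq_mtrace_ketbra[OF f W])
  finally show "Im (cinner v (hs_adjoint d \<Lambda> (ketbra f f) *\<^sub>v v)) = 0 \<and>
      0 \<le> Re (cinner v (hs_adjoint d \<Lambda> (ketbra f f) *\<^sub>v v))"
    using psd f hermitian_form_real[of m "\<Lambda> (ketbra v v)" f] by (auto simp: psd_mat_def)
qed

section \<open>Product bases and partial traces\<close>

lemma orthonormal_basis_complete:
  assumes onb: "orthonormal_basis d e" and pq: "p < d" "q < d"
  shows "(\<Sum>b<d. e b $ p * cnj (e b $ q)) = (if p = q then 1 else 0)"
proof -
  define U where "U = mat d d (\<lambda>(p, b). e b $ p)"
  define V where "V = mat d d (\<lambda>(b, q). cnj (e b $ q))"
  have ec: "\<And>b. b < d \<Longrightarrow> dim_vec (e b) = d" using onb by (auto simp: orthonormal_basis_def)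
  have Uc: "U \<in> carrier_mat d d" and Vc: "V \<in> carrier_mat d d" by (auto simp: U_def V_def)
  have "V * U = 1\<^sub>m d"
  proof (rule eq_matI)
    fix i j assume ij: "i < dim_row (1\<^sub>m d)" "j < dim_col (1\<^sub>m d)"
    then have "(V * U) $$ (i, j) = (\<Sum>p\<in>{0..<d}. cnj (e i $ p) * e j $ p)"
      by (simp add: V_def U_def scalar_prod_def)
    also have "\<dots> = cinner (e i) (e j)" using ij ec by (simp add: cinner_def atLeast0LessThan)
    also have "\<dots> = 1\<^sub>m d $$ (i, j)" using ij onb by (simp add: orthonormal_basis_def)
    finally show "(V * U) $$ (i, j) = 1\<^sub>m d $$ (i, j)" .
  qed (auto simp: V_def U_def)
  then have "U * V = 1\<^sub>m d" by (rule mat_mult_left_right_inverse[OF Vc Uc])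
  then have "(U * V) $$ (p, q) = 1\<^sub>m d $$ (p, q)" by simp
  then show ?thesis using pq by (simp add: U_def V_def scalar_prod_def atLeast0LessThan)
qed

lemma digit_less: "0 < d \<Longrightarrow> digit d N i J < d"
  by (simp add: digit_def)

definition product_vec :: "nat \<Rightarrow> nat \<Rightarrow> (nat \<Rightarrow> nat \<Rightarrow> complex vec) \<Rightarrow> (nat \<Rightarrow> nat) \<Rightarrow> complex vec" where
  "product_vec d N e j = vec (d ^ N) (\<lambda>J. \<Prod>i<N. e i (j i) $ digit d N i J)"

text \<open>\<open>I \<otimes> \<dots> \<otimes> Y \<otimes> \<dots> \<otimes> I\<close> with \<open>Y\<close> in the \<open>k\<close>-th factor; it is the
  Hilbert-Schmidt adjoint of \<^const>\<open>ptrace_keep\<close>.\<close>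
definition embed_factor :: "nat \<Rightarrow> nat \<Rightarrow> nat \<Rightarrow> complex mat \<Rightarrow> complex mat" where
  "embed_factor d N k Y = mat (d ^ N) (d ^ N) (\<lambda>(J, J').
     if \<forall>i<N. i \<noteq> k \<longrightarrow> digit d N i J = digit d N i J'
     then Y $$ (digit d N k J, digit d N k J') else 0)"

text \<open>The sum over all multi-indices factorises into one sum per tensor factor; the
  factors other than \<open>k\<close> collapse by completeness of the bases \<open>e i\<close>.\<close>
lemma sum_product_vec_outer:
  assumes d: "0 < d" and onb: "\<forall>i<N. orthonormal_basis d (e i)" and k: "k < N" and a: "a < d"
    and J: "J < d ^ N" "J' < d ^ N"
  shows "(\<Sum>j\<in>{j \<in> PiE {..<N} (\<lambda>_. {..<d}). j k = a}. product_vec d N e j $ J * cnj (product_vec d N e j $ J'))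
    = (\<Prod>i<N. if i = k then e k a $ digit d N k J * cnj (e k a $ digit d N k J')
        else if digit d N i J = digit d N i J' then 1 else 0)"
proof -
  define h where "h i b = (if i = k then (if b = a then 1 else 0) else 1) *
      (e i b $ digit d N i J * cnj (e i b $ digit d N i J'))" for i b
  have factor: "(if j k = a then 1 else 0) * (product_vec d N e j $ J * cnj (product_vec d N e j $ J'))
      = (\<Prod>i<N. h i (j i))" for j
  proof -
    have "(\<Prod>i<N. h i (j i)) = (\<Prod>i<N. (if i = k then (if j i = a then 1 else 0) else 1)) *
        (\<Prod>i<N. e i (j i) $ digit d N i J * cnj (e i (j i) $ digit d N i J'))"
      unfolding h_def by (rule prod.distrib)
    also have "(\<Prod>i<N. (if i = k then (if j i = a then 1 else 0) else 1)) = (if j k = a then 1 else 0)"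
      using k by (simp add: prod.delta)
    also have "(\<Prod>i<N. e i (j i) $ digit d N i J * cnj (e i (j i) $ digit d N i J'))
        = product_vec d N e j $ J * cnj (product_vec d N e j $ J')"
      using J by (simp add: product_vec_def prod.distrib cnj_prod)
    finally show ?thesis by simp
  qed
  have sum_h: "(\<Sum>b<d. h i b) = (if i = k then e k a $ digit d N k J * cnj (e k a $ digit d N k J')
       else if digit d N i J = digit d N i J' then 1 else 0)" if i: "i < N" for i
  proof (cases "i = k")
    case True
    have "(\<Sum>b<d. h i b) = (\<Sum>b<d. if b = a then e k a $ digit d N k J * cnj (e k a $ digit d N k J') else 0)"
      using True by (intro sum.cong refl) (auto simp: h_def)
    then show ?thesis using True a by simp
  next
    case False
    have "(\<Sum>b<d. h i b) = (\<Sum>b<d. e i b $ digit d N i J * cnj (e i b $ digit d N i J'))"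
      using False by (simp add: h_def)
    also have "\<dots> = (if digit d N i J = digit d N i J' then 1 else 0)"
      using onb i digit_less[OF d] by (intro orthonormal_basis_complete) auto
    finally show ?thesis using False by simp
  qed
  have "(\<Sum>j\<in>{j \<in> PiE {..<N} (\<lambda>_. {..<d}). j k = a}. product_vec d N e j $ J * cnj (product_vec d N e j $ J'))
      = (\<Sum>j\<in>PiE {..<N} (\<lambda>_. {..<d}). (if j k = a then 1 else 0) * (product_vec d N e j $ J * cnj (product_vec d N e j $ J')))"
    by (simp add: sum.inter_filter finite_PiE) (rule sum.cong; simp)
  also have "\<dots> = (\<Sum>j\<in>PiE {..<N} (\<lambda>_. {..<d}). \<Prod>i<N. h i (j i))"
    by (simp only: factor)
  also have "\<dots> = (\<Prod>i<N. \<Sum>b<d. h i b)"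
    by (rule prod_sum_PiE[symmetric]) auto
  also have "\<dots> = (\<Prod>i<N. if i = k then e k a $ digit d N k J * cnj (e k a $ digit d N k J')
       else if digit d N i J = digit d N i J' then 1 else 0)"
    by (rule prod.cong[OF refl]) (simp add: sum_h)
  finally show ?thesis .
qed

lemma embed_factor_ketbra_product_vec:
  assumes d: "0 < d" and onb: "\<forall>i<N. orthonormal_basis d (e i)" and k: "k < N" and a: "a < d"
    and J: "J < d ^ N" "J' < d ^ N"
  shows "embed_factor d N k (ketbra (e k a) (e k a)) $$ (J, J')
    = (\<Sum>j\<in>{j \<in> PiE {..<N} (\<lambda>_. {..<d}). j k = a}. product_vec d N e j $ J * cnj (product_vec d N e j $ J'))"
proof -
  define same where "same = (\<forall>i<N. i \<noteq> k \<longrightarrow> digit d N i J = digit d N i J')"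
  have "(\<Sum>j\<in>{j \<in> PiE {..<N} (\<lambda>_. {..<d}). j k = a}. product_vec d N e j $ J * cnj (product_vec d N e j $ J'))
      = (e k a $ digit d N k J * cnj (e k a $ digit d N k J')) *
        (\<Prod>i\<in>{..<N} - {k}. if digit d N i J = digit d N i J' then 1 else 0)"
    unfolding sum_product_vec_outer[OF assms] using k by (subst prod.remove[of _ k]) (auto intro!: prod.cong)
  also have "(\<Prod>i\<in>{..<N} - {k}. if digit d N i J = digit d N i J' then 1 else 0 :: complex)
      = (if same then 1 else 0)"
  proof (cases same)
    case True
    then show ?thesis by (auto simp: same_def intro!: prod.neutral)
  next
    case False
    then obtain i where "i < N" "i \<noteq> k" "digit d N i J \<noteq> digit d N i J'" by (auto simp: same_def)
    then have "(\<Prod>i\<in>{..<N} - {k}. if digit d N i J = digit d N i J' then 1 else 0) = (0 :: complex)"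
      by (intro prod_zero) auto
    then show ?thesis using False by simp
  qed
  also have "(e k a $ digit d N k J * cnj (e k a $ digit d N k J')) * (if same then 1 else 0)
      = embed_factor d N k (ketbra (e k a) (e k a)) $$ (J, J')"
  proof -
    have "dim_vec (e k a) = d" using onb k a by (auto simp: orthonormal_basis_def)
    then show ?thesis using J digit_less[OF d] by (auto simp: embed_factor_def ketbra_def same_def)
  qed
  finally show ?thesis ..
qed

lemma hs_inner_ptrace_keep:
  assumes d: "0 < d" and M: "M \<in> carrier_mat (d ^ N) (d ^ N)" and Y: "Y \<in> carrier_mat d d"
  shows "mtrace (cadj (ptrace_keep d N k M) * Y) = mtrace (cadj M * embed_factor d N k Y)"
proof -
  define D where "D = d ^ N"
  define same where "same J J' \<longleftrightarrow> (\<forall>i<N. i \<noteq> k \<longrightarrow> digit d N i J = digit d N i J')" for J J'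
  define S where "S = {(J, J'). J < D \<and> J' < D \<and> same J J'}"
  define g where "g x = (digit d N k (fst x), digit d N k (snd x))" for x :: "nat \<times> nat"
  have P: "ptrace_keep d N k M \<in> carrier_mat d d" by (simp add: ptrace_keep_def)
  have E: "embed_factor d N k Y \<in> carrier_mat D D" by (simp add: embed_factor_def D_def)
  have finS: "finite S" by (rule finite_subset[of _ "{..<D} \<times> {..<D}"]) (auto simp: S_def)
  have embed: "embed_factor d N k Y $$ (J, J') = (if same J J' then Y $$ (digit d N k J, digit d N k J') else 0)"
    if "J < D" "J' < D" for J J'
    using that by (simp add: embed_factor_def D_def same_def)
  have "mtrace (cadj (ptrace_keep d N k M) * Y) = (\<Sum>y\<in>{..<d} \<times> {..<d}. cnj (ptrace_keep d N k M $$ y) * Y $$ y)"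
    by (simp add: mtrace_cadj_mult[OF P Y] case_prod_beta)
  also have "\<dots> = (\<Sum>y\<in>{..<d} \<times> {..<d}. \<Sum>x\<in>{x \<in> S. g x = y}. cnj (M $$ x) * Y $$ g x)"
  proof (rule sum.cong[OF refl])
    fix y assume y: "y \<in> {..<d} \<times> {..<d}"
    obtain q p where qp: "y = (q, p)" by fastforce
    have "{(j, j'). j < d ^ N \<and> j' < d ^ N \<and> digit d N k j = q \<and> digit d N k j' = p \<and>
          (\<forall>i<N. i \<noteq> k \<longrightarrow> digit d N i j = digit d N i j')} = {x \<in> S. g x = y}"
      by (auto simp: S_def g_def qp same_def D_def)
    then have "ptrace_keep d N k M $$ y = (\<Sum>x\<in>{x \<in> S. g x = y}. M $$ x)"
      using y qp by (simp add: ptrace_keep_def case_prod_beta)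
    then show "cnj (ptrace_keep d N k M $$ y) * Y $$ y = (\<Sum>x\<in>{x \<in> S. g x = y}. cnj (M $$ x) * Y $$ g x)"
      by (simp add: cnj_sum sum_distrib_right)
  qed
  also have "\<dots> = (\<Sum>x\<in>S. cnj (M $$ x) * Y $$ g x)"
    by (rule sum.group) (use finS d in \<open>auto simp: S_def g_def digit_less\<close>)
  also have "\<dots> = (\<Sum>x\<in>{..<D} \<times> {..<D}. if same (fst x) (snd x) then cnj (M $$ x) * Y $$ g x else 0)"
  proof -
    have "S = {x \<in> {..<D} \<times> {..<D}. same (fst x) (snd x)}" by (auto simp: S_def)
    then show ?thesis by (simp add: sum.inter_filter)
  qed
  also have "\<dots> = (\<Sum>x\<in>{..<D} \<times> {..<D}. cnj (M $$ x) * embed_factor d N k Y $$ x)"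
    by (rule sum.cong[OF refl]) (clarsimp simp: embed g_def)
  also have "\<dots> = mtrace (cadj M * embed_factor d N k Y)"
    using M by (simp add: mtrace_cadj_mult[OF _ E] D_def case_prod_beta)
  finally show ?thesis .
qed

lemma hs_adjoint_ptrace_keep:
  assumes d: "0 < d" and lin: "linear_op_map d (d ^ N) \<Lambda>"
    and marg: "\<forall>X\<in>carrier_mat d d. \<Psi> X = ptrace_keep d N k (\<Lambda> X)" and Y: "Y \<in> carrier_mat d d"
  shows "hs_adjoint d \<Psi> Y = hs_adjoint d \<Lambda> (embed_factor d N k Y)"
proof (rule eq_matI)
  fix r s assume "r < dim_row (hs_adjoint d \<Lambda> (embed_factor d N k Y))"
    "s < dim_col (hs_adjoint d \<Lambda> (embed_factor d N k Y))"
  then have rs: "r < d" "s < d" by (simp_all add: hs_adjoint_def)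
  have E: "mat_unit d r s \<in> carrier_mat d d" by (simp add: mat_unit_def)
  have L: "\<Lambda> (mat_unit d r s) \<in> carrier_mat (d ^ N) (d ^ N)" using lin E by (simp add: linear_op_map_def)
  show "hs_adjoint d \<Psi> Y $$ (r, s) = hs_adjoint d \<Lambda> (embed_factor d N k Y) $$ (r, s)"
    using rs marg E by (simp add: hs_adjoint_entry hs_inner_ptrace_keep[OF d L Y])
qed (simp_all add: hs_adjoint_def)

definition product_effect ::
    "nat \<Rightarrow> nat \<Rightarrow> (nat \<Rightarrow> nat \<Rightarrow> complex vec) \<Rightarrow> (complex mat \<Rightarrow> complex mat) \<Rightarrow> (nat \<Rightarrow> nat) \<Rightarrow> complex mat" where
  "product_effect d N e \<Lambda> j = hs_adjoint d \<Lambda> (ketbra (product_vec d N e j) (product_vec d N e j))"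

lemma psd_product_effect:
  assumes "quantum_channel d (d ^ N) \<Lambda>"
  shows "psd_mat d (product_effect d N e \<Lambda> j)"
  unfolding product_effect_def
  by (rule psd_hs_adjoint_ketbra) (use assms in \<open>auto simp: quantum_channel_def product_vec_def\<close>)

lemma hs_adjoint_marginal_ketbra:
  assumes d: "0 < d" and onb: "\<forall>i<N. orthonormal_basis d (e i)" and k: "k < N" and a: "a < d"
    and rs: "r < d" "s < d" and lin: "linear_op_map d (d ^ N) \<Lambda>"
    and marg: "\<forall>X\<in>carrier_mat d d. \<Psi> X = ptrace_keep d N k (\<Lambda> X)"
  shows "hs_adjoint d \<Psi> (ketbra (e k a) (e k a)) $$ (r, s)
    = (\<Sum>j\<in>{j \<in> PiE {..<N} (\<lambda>_. {..<d}). j k = a}. product_effect d N e \<Lambda> j $$ (r, s))"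
proof -
  define T where "T = {j \<in> PiE {..<N} (\<lambda>_. {..<d}). j k = a}"
  define M where "M = \<Lambda> (mat_unit d r s)"
  let ?J = "{..<d ^ N} \<times> {..<d ^ N}" and ?t = "product_vec d N e"
  have "dim_vec (e k a) = d" using onb k a by (auto simp: orthonormal_basis_def)
  then have K: "ketbra (e k a) (e k a) \<in> carrier_mat d d" by (simp add: ketbra_def)
  have Mc: "M \<in> carrier_mat (d ^ N) (d ^ N)"
    using lin by (simp add: M_def linear_op_map_def mat_unit_def)
  have Kt: "ketbra (?t j) (?t j) \<in> carrier_mat (d ^ N) (d ^ N)" for j
    by (simp add: ketbra_def product_vec_def)
  have E: "embed_factor d N k (ketbra (e k a) (e k a)) \<in> carrier_mat (d ^ N) (d ^ N)"
    by (simp add: embed_factor_def)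
  have "hs_adjoint d \<Psi> (ketbra (e k a) (e k a)) $$ (r, s)
      = mtrace (cadj M * embed_factor d N k (ketbra (e k a) (e k a)))"
    by (simp add: hs_adjoint_ptrace_keep[OF d lin marg K] hs_adjoint_entry rs M_def)
  also have "\<dots> = (\<Sum>(Q, P)\<in>?J. cnj (M $$ (Q, P)) * (\<Sum>j\<in>T. ?t j $ Q * cnj (?t j $ P)))"
    unfolding mtrace_cadj_mult[OF Mc E]
    by (rule sum.cong[OF refl]) (auto simp: embed_factor_ketbra_product_vec[OF d onb k a] T_def)
  also have "\<dots> = (\<Sum>j\<in>T. \<Sum>(Q, P)\<in>?J. cnj (M $$ (Q, P)) * (?t j $ Q * cnj (?t j $ P)))"
    unfolding case_prod_beta sum_distrib_left by (rule sum.swap)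
  also have "\<dots> = (\<Sum>j\<in>T. product_effect d N e \<Lambda> j $$ (r, s))"
  proof (rule sum.cong[OF refl])
    fix j
    have "product_effect d N e \<Lambda> j $$ (r, s) = mtrace (cadj M * ketbra (?t j) (?t j))"
      by (simp add: product_effect_def hs_adjoint_entry rs M_def)
    also have "\<dots> = (\<Sum>(Q, P)\<in>?J. cnj (M $$ (Q, P)) * (?t j $ Q * cnj (?t j $ P)))"
      unfolding mtrace_cadj_mult[OF Mc Kt] by (rule sum.cong[OF refl]) (auto simp: ketbra_def product_vec_def)
    finally show "(\<Sum>(Q, P)\<in>?J. cnj (M $$ (Q, P)) * (?t j $ Q * cnj (?t j $ P)))
        = product_effect d N e \<Lambda> j $$ (r, s)" ..
  qed
  finally show ?thesis by (simp add: T_def)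
qed

text \<open>Trace preservation of \<open>\<Psi>\<close> means \<open>\<Psi>\<^sup>*(I) = I\<close>; here only its diagonal is needed.\<close>
lemma hs_adjoint_ketbra_basis_diag_sum:
  assumes lin: "linear_op_map d d \<Psi>" and tp: "trace_preserving d \<Psi>"
    and onb: "orthonormal_basis d e" and r: "r < d"
  shows "(\<Sum>a<d. hs_adjoint d \<Psi> (ketbra (e a) (e a)) $$ (r, r)) = 1"
proof -
  define P where "P = \<Psi> (mat_unit d r r)"
  let ?I = "{..<d} \<times> {..<d}"
  have E: "mat_unit d r r \<in> carrier_mat d d" by (simp add: mat_unit_def)
  have Pc: "P \<in> carrier_mat d d" using lin E by (simp add: P_def linear_op_map_def)
  have "(\<Sum>a<d. hs_adjoint d \<Psi> (ketbra (e a) (e a)) $$ (r, r))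
      = (\<Sum>a<d. \<Sum>(q, p)\<in>?I. cnj (P $$ (q, p)) * (e a $ q * cnj (e a $ p)))"
  proof (rule sum.cong[OF refl])
    fix a assume "a \<in> {..<d}"
    then have ea: "dim_vec (e a) = d" using onb by (auto simp: orthonormal_basis_def)
    then have K: "ketbra (e a) (e a) \<in> carrier_mat d d" by (simp add: ketbra_def)
    have "hs_adjoint d \<Psi> (ketbra (e a) (e a)) $$ (r, r) = mtrace (cadj P * ketbra (e a) (e a))"
      by (simp add: hs_adjoint_entry r P_def)
    also have "\<dots> = (\<Sum>(q, p)\<in>?I. cnj (P $$ (q, p)) * (e a $ q * cnj (e a $ p)))"
      unfolding mtrace_cadj_mult[OF Pc K] by (rule sum.cong[OF refl]) (auto simp: ketbra_def ea)
    finally show "hs_adjoint d \<Psi> (ketbra (e a) (e a)) $$ (r, r)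
        = (\<Sum>(q, p)\<in>?I. cnj (P $$ (q, p)) * (e a $ q * cnj (e a $ p)))" .
  qed
  also have "\<dots> = (\<Sum>(q, p)\<in>?I. cnj (P $$ (q, p)) * (\<Sum>a<d. e a $ q * cnj (e a $ p)))"
    unfolding case_prod_beta sum_distrib_left by (rule sum.swap)
  also have "\<dots> = (\<Sum>(q, p)\<in>?I. if q = p then cnj (P $$ (q, p)) else 0)"
    by (rule sum.cong[OF refl]) (auto simp: orthonormal_basis_complete[OF onb])
  also have "\<dots> = (\<Sum>q<d. cnj (P $$ (q, q)))"
    by (simp add: sum.cartesian_product[symmetric])
  also have "\<dots> = cnj (mtrace P)"
    by (simp add: mtrace_carrier[OF Pc] cnj_sum)
  also have "\<dots> = 1"
    using tp E r by (simp add: trace_preserving_def P_def mtrace_def mat_unit_def)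
  finally show ?thesis .
qed

lemma sum_mtrace_product_effect:
  assumes d: "0 < d" and onb: "\<forall>i<N. orthonormal_basis d (e i)" and N: "0 < N"
    and lin: "linear_op_map d (d ^ N) \<Lambda>" and ch: "quantum_channel d d \<Psi>"
    and marg: "\<forall>X\<in>carrier_mat d d. \<Psi> X = ptrace_keep d N 0 (\<Lambda> X)"
  shows "(\<Sum>j\<in>PiE {..<N} (\<lambda>_. {..<d}). mtrace (product_effect d N e \<Lambda> j)) = of_nat d"
proof -
  let ?JJ = "PiE {..<N} (\<lambda>_. {..<d})" and ?B = "product_effect d N e \<Lambda>"
  let ?A = "\<lambda>a. hs_adjoint d \<Psi> (ketbra (e 0 a) (e 0 a))"
  have onb0: "orthonormal_basis d (e 0)" using onb N by simp
  have lin0: "linear_op_map d d \<Psi>" and tp0: "trace_preserving d \<Psi>"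
    using ch by (simp_all add: quantum_channel_def)
  have "(\<Sum>j\<in>?JJ. mtrace (?B j)) = (\<Sum>a<d. \<Sum>j\<in>{j \<in> ?JJ. j 0 = a}. mtrace (?B j))"
    by (rule sum.group[symmetric]) (use N in \<open>auto simp: finite_PiE PiE_iff\<close>)
  also have "\<dots> = (\<Sum>a<d. \<Sum>r<d. \<Sum>j\<in>{j \<in> ?JJ. j 0 = a}. ?B j $$ (r, r))"
    by (rule sum.cong[OF refl]) (unfold product_effect_def mtrace_carrier[OF hs_adjoint_carrier], rule sum.swap)
  also have "\<dots> = (\<Sum>a<d. \<Sum>r<d. ?A a $$ (r, r))"
    by (intro sum.cong refl) (simp add: hs_adjoint_marginal_ketbra[OF d onb N _ _ _ lin marg])
  also have "\<dots> = (\<Sum>r<d. \<Sum>a<d. ?A a $$ (r, r))"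
    by (rule sum.swap)
  also have "\<dots> = (\<Sum>r<d. 1)"
    by (intro sum.cong refl) (simp add: hs_adjoint_ketbra_basis_diag_sum[OF lin0 tp0 onb0])
  finally show ?thesis by simp
qed

section \<open>Weighted sums of rank-one operators\<close>

lemma weighted_sum_square_le:
  fixes \<tau> u :: "'j \<Rightarrow> real"
  assumes "finite A" "\<And>j. j \<in> A \<Longrightarrow> 0 < \<tau> j"
  shows "(\<Sum>j\<in>A. \<tau> j * u j)\<^sup>2 \<le> (\<Sum>j\<in>A. \<tau> j) * (\<Sum>j\<in>A. \<tau> j * (u j)\<^sup>2)"
proof (cases "A = {}")
  case True
  then show ?thesis by simp
next
  case False
  define T where "T = (\<Sum>j\<in>A. \<tau> j)"
  define W where "W = (\<Sum>j\<in>A. \<tau> j * u j)"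
  define Q where "Q = (\<Sum>j\<in>A. \<tau> j * (u j)\<^sup>2)"
  have T: "T > 0" unfolding T_def using assms False by (intro sum_pos) auto
  have "0 \<le> (\<Sum>j\<in>A. \<tau> j * (u j * T - W)\<^sup>2)"
    using assms(2) by (intro sum_nonneg mult_nonneg_nonneg) (auto simp: less_imp_le)
  also have "\<dots> = (\<Sum>j\<in>A. T\<^sup>2 * (\<tau> j * (u j)\<^sup>2) - (2 * T * W) * (\<tau> j * u j) + W\<^sup>2 * \<tau> j)"
    by (intro sum.cong refl) (simp add: power2_eq_square algebra_simps)
  also have "\<dots> = T\<^sup>2 * Q - (2 * T * W) * W + W\<^sup>2 * T"
    by (simp add: sum.distrib sum_subtractf sum_distrib_left T_def W_def Q_def)
  also have "\<dots> = T * (T * Q - W\<^sup>2)" by (simp add: power2_eq_square algebra_simps)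
  finally have "0 \<le> T * Q - W\<^sup>2" using T by (simp add: zero_le_mult_iff)
  then show ?thesis by (simp add: T_def W_def Q_def)
qed

lemma norm_sum_square_div_le:
  fixes \<tau> :: "'j \<Rightarrow> real" and y :: "'j \<Rightarrow> complex"
  assumes "finite A" "\<And>j. j \<in> A \<Longrightarrow> 0 < \<tau> j"
  shows "(cmod (\<Sum>j\<in>A. y j))\<^sup>2 / (\<Sum>j\<in>A. \<tau> j) \<le> (\<Sum>j\<in>A. (cmod (y j))\<^sup>2 / \<tau> j)"
proof (cases "A = {}")
  case True
  then show ?thesis by simp
next
  case False
  have T: "0 < (\<Sum>j\<in>A. \<tau> j)" using assms False by (intro sum_pos) auto
  have "(cmod (\<Sum>j\<in>A. y j))\<^sup>2 \<le> (\<Sum>j\<in>A. cmod (y j))\<^sup>2"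
    by (simp add: norm_sum power_mono)
  also have "(\<Sum>j\<in>A. cmod (y j)) = (\<Sum>j\<in>A. \<tau> j * (cmod (y j) / \<tau> j))"
    using assms(2) by (intro sum.cong refl) (simp add: less_imp_neq[symmetric])
  also have "(\<Sum>j\<in>A. \<tau> j * (cmod (y j) / \<tau> j))\<^sup>2 \<le> (\<Sum>j\<in>A. \<tau> j) * (\<Sum>j\<in>A. \<tau> j * (cmod (y j) / \<tau> j)\<^sup>2)"
    by (rule weighted_sum_square_le[OF assms])
  also have "(\<Sum>j\<in>A. \<tau> j * (cmod (y j) / \<tau> j)\<^sup>2) = (\<Sum>j\<in>A. (cmod (y j))\<^sup>2 / \<tau> j)"
    using assms(2) by (intro sum.cong refl) (simp add: power2_eq_square less_imp_neq[symmetric])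
  finally show ?thesis using T by (simp add: divide_le_eq mult.commute)
qed

lemma Re_cnj_mult_div_of_real: "Re (cnj y * y / of_real \<tau>) = (cmod y)\<^sup>2 / \<tau>"
proof -
  have "cnj y * y = of_real ((cmod y)\<^sup>2)" using complex_norm_square[of y] by (simp add: mult.commute)
  then show ?thesis by (simp flip: of_real_divide)
qed

definition weighted_ketbra_sum :: "nat \<Rightarrow> 'j set \<Rightarrow> ('j \<Rightarrow> complex vec) \<Rightarrow> ('j \<Rightarrow> complex) \<Rightarrow> complex mat" where
  "weighted_ketbra_sum n S x c = mat n n (\<lambda>(p, q). \<Sum>i\<in>S. ketbra (x i) (x i) $$ (p, q) / c i)"

lemma weighted_ketbra_sum_carrier[simp]: "weighted_ketbra_sum n S x c \<in> carrier_mat n n"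
  by (simp add: weighted_ketbra_sum_def)

lemma weighted_ketbra_sum_dim[simp]:
  "dim_row (weighted_ketbra_sum n S x c) = n" "dim_col (weighted_ketbra_sum n S x c) = n"
  by (simp_all add: weighted_ketbra_sum_def)

lemma weighted_ketbra_sum_entry:
  assumes "\<And>i. i \<in> S \<Longrightarrow> x i \<in> carrier_vec n" "p < n" "q < n"
  shows "weighted_ketbra_sum n S x c $$ (p, q) = (\<Sum>i\<in>S. x i $ p * cnj (x i $ q) / c i)"
proof -
  have "dim_vec (x i) = n" if "i \<in> S" for i using assms(1)[OF that] by simp
  then show ?thesis using assms(2,3) by (auto simp: weighted_ketbra_sum_def ketbra_def intro!: sum.cong)
qed

lemma hermitian_weighted_ketbra_sum:
  assumes "\<And>i. i \<in> S \<Longrightarrow> x i \<in> carrier_vec n" "\<And>i. i \<in> S \<Longrightarrow> Im (c i) = 0"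
  shows "hermitian_mat n (weighted_ketbra_sum n S x c)"
proof -
  let ?K = "weighted_ketbra_sum n S x c"
  have cc: "cnj (c i) = c i" if "i \<in> S" for i using assms(2)[OF that] by (simp add: complex_eq_iff)
  have "cadj ?K = ?K"
  proof (rule eq_matI)
    fix p q assume "p < dim_row ?K" "q < dim_col ?K"
    then have pq: "p < n" "q < n" by auto
    have "cadj ?K $$ (p, q) = cnj (?K $$ (q, p))" using pq by (simp add: cadj_def)
    also have "\<dots> = (\<Sum>i\<in>S. x i $ p * cnj (x i $ q) / c i)"
      using pq by (simp add: weighted_ketbra_sum_entry[OF assms(1)] cnj_sum cc mult.commute)
    also have "\<dots> = ?K $$ (p, q)" using pq by (simp add: weighted_ketbra_sum_entry[OF assms(1)])
    finally show "cadj ?K $$ (p, q) = ?K $$ (p, q)" .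
  qed (auto simp: cadj_def)
  then show ?thesis by (simp add: hermitian_mat_def)
qed

lemma cinner_weighted_ketbra_sum:
  assumes "finite S" "\<And>i. i \<in> S \<Longrightarrow> x i \<in> carrier_vec n" "v \<in> carrier_vec n"
  shows "cinner v (weighted_ketbra_sum n S x c *\<^sub>v v) = (\<Sum>i\<in>S. cnj (cinner (x i) v) * cinner (x i) v / c i)"
proof -
  have "cinner v (weighted_ketbra_sum n S x c *\<^sub>v v)
      = (\<Sum>p<n. \<Sum>q<n. cnj (v $ p) * weighted_ketbra_sum n S x c $$ (p, q) * v $ q)"
    by (rule cinner_mult_mat_vec[OF assms(3)]) simp
  also have "\<dots> = (\<Sum>p<n. \<Sum>q<n. \<Sum>i\<in>S. (cnj (v $ p) * x i $ p) * (cnj (x i $ q) * v $ q) / c i)"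
    by (intro sum.cong refl)
      (simp add: weighted_ketbra_sum_entry[OF assms(2)] sum_distrib_left sum_distrib_right mult_ac)
  also have "\<dots> = (\<Sum>p<n. \<Sum>i\<in>S. \<Sum>q<n. (cnj (v $ p) * x i $ p) * (cnj (x i $ q) * v $ q) / c i)"
    by (intro sum.cong refl) (rule sum.swap)
  also have "\<dots> = (\<Sum>i\<in>S. \<Sum>p<n. \<Sum>q<n. (cnj (v $ p) * x i $ p) * (cnj (x i $ q) * v $ q) / c i)"
    by (rule sum.swap)
  also have "\<dots> = (\<Sum>i\<in>S. cnj (cinner (x i) v) * cinner (x i) v / c i)"
  proof (intro sum.cong refl)
    fix i assume "i \<in> S"
    then have "dim_vec (x i) = n" using assms(2) by simp
    then show "(\<Sum>p<n. \<Sum>q<n. (cnj (v $ p) * x i $ p) * (cnj (x i $ q) * v $ q) / c i)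
        = cnj (cinner (x i) v) * cinner (x i) v / c i"
      by (simp add: cinner_def cnj_sum sum_product sum_divide_distrib mult.commute) (rule sum.swap)
  qed
  finally show ?thesis .
qed

lemma mtrace_weighted_ketbra_sum:
  assumes "\<And>i. i \<in> S \<Longrightarrow> x i \<in> carrier_vec n"
  shows "mtrace (weighted_ketbra_sum n S x c) = (\<Sum>i\<in>S. cinner (x i) (x i) / c i)"
proof -
  have "mtrace (weighted_ketbra_sum n S x c) = (\<Sum>p<n. \<Sum>i\<in>S. x i $ p * cnj (x i $ p) / c i)"
    by (simp add: mtrace_carrier[OF weighted_ketbra_sum_carrier] weighted_ketbra_sum_entry[OF assms])
  also have "\<dots> = (\<Sum>i\<in>S. \<Sum>p<n. x i $ p * cnj (x i $ p) / c i)" by (rule sum.swap)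
  also have "\<dots> = (\<Sum>i\<in>S. cinner (x i) (x i) / c i)"
  proof (intro sum.cong refl)
    fix i assume "i \<in> S"
    then have "dim_vec (x i) = n" using assms by simp
    then show "(\<Sum>p<n. x i $ p * cnj (x i $ p) / c i) = cinner (x i) (x i) / c i"
      by (simp add: cinner_def sum_divide_distrib mult.commute)
  qed
  finally show ?thesis .
qed

lemma cinner_sum_left:
  assumes "z \<in> carrier_vec n" "\<And>j. j \<in> A \<Longrightarrow> x j \<in> carrier_vec n"
    and "\<And>p. p < n \<Longrightarrow> z $ p = (\<Sum>j\<in>A. x j $ p)"
  shows "cinner z v = (\<Sum>j\<in>A. cinner (x j) v)"
proof -
  have "cinner z v = (\<Sum>p<n. \<Sum>j\<in>A. cnj (x j $ p) * v $ p)"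
    using assms(1,3) by (simp add: cinner_def cnj_sum sum_distrib_right)
  also have "\<dots> = (\<Sum>j\<in>A. \<Sum>p<n. cnj (x j $ p) * v $ p)" by (rule sum.swap)
  also have "\<dots> = (\<Sum>j\<in>A. cinner (x j) v)"
    by (intro sum.cong refl) (auto simp: cinner_def dest: assms(2))
  finally show ?thesis .
qed

text \<open>Coarse-graining lowers the operator: this is the operator convexity of
  \<open>(x, t) \<mapsto> |x\<rangle>\<langle>x| / t\<close>, reduced by Cauchy-Schwarz to
  \<open>|\<Sum> y\<^sub>j|\<^sup>2 / \<Sum> \<tau>\<^sub>j \<le> \<Sum> |y\<^sub>j|\<^sup>2 / \<tau>\<^sub>j\<close> for \<open>y\<^sub>j = \<langle>x\<^sub>j, v\<rangle>\<close>.\<close>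
lemma loewner_ge_weighted_ketbra_sum_merge:
  fixes \<tau> :: "'j \<Rightarrow> real" and f :: "'j \<Rightarrow> 'a"
  assumes finS: "finite S" and x: "\<And>j. j \<in> S \<Longrightarrow> x j \<in> carrier_vec n"
    and \<tau>: "\<And>j. j \<in> S \<Longrightarrow> 0 < \<tau> j"
    and finT: "finite T" and z: "\<And>a. a \<in> T \<Longrightarrow> z a \<in> carrier_vec n"
    and z_sum: "\<And>a p. a \<in> T \<Longrightarrow> p < n \<Longrightarrow> z a $ p = (\<Sum>j\<in>{j \<in> S. f j = a}. x j $ p)"
    and c: "\<And>a. a \<in> T \<Longrightarrow> c a = of_real (\<Sum>j\<in>{j \<in> S. f j = a}. \<tau> j)"
  shows "loewner_ge n (weighted_ketbra_sum n S x (\<lambda>j. of_real (\<tau> j))) (weighted_ketbra_sum n T z c)"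
proof -
  let ?H = "weighted_ketbra_sum n S x (\<lambda>j. of_real (\<tau> j))" and ?G = "weighted_ketbra_sum n T z c"
  let ?S = "\<lambda>a. {j \<in> S. f j = a}"
  have H: "hermitian_mat n ?H" by (rule hermitian_weighted_ketbra_sum) (simp_all add: x)
  have G: "hermitian_mat n ?G" by (rule hermitian_weighted_ketbra_sum) (simp_all add: z c)
  have "Re (cinner v (?G *\<^sub>v v)) \<le> Re (cinner v (?H *\<^sub>v v))" if v: "v \<in> carrier_vec n" for v
  proof -
    define y where "y j = cinner (x j) v" for j
    define h where "h j = (cmod (y j))\<^sup>2 / \<tau> j" for j
    have zy: "cinner (z a) v = (\<Sum>j\<in>?S a. y j)" if a: "a \<in> T" for a
      unfolding y_def by (rule cinner_sum_left[OF z[OF a] _ z_sum[OF a]]) (simp_all add: x)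
    have "Re (cinner v (?G *\<^sub>v v)) = (\<Sum>a\<in>T. Re (cnj (cinner (z a) v) * cinner (z a) v / c a))"
      by (simp only: cinner_weighted_ketbra_sum[OF finT z v] Re_sum)
    also have "\<dots> = (\<Sum>a\<in>T. (cmod (\<Sum>j\<in>?S a. y j))\<^sup>2 / (\<Sum>j\<in>?S a. \<tau> j))"
      by (rule sum.cong[OF refl]) (simp only: zy c Re_cnj_mult_div_of_real)
    also have "\<dots> \<le> (\<Sum>a\<in>T. \<Sum>j\<in>?S a. h j)"
      unfolding h_def by (rule sum_mono, rule norm_sum_square_div_le) (use finS \<tau> in auto)
    also have "\<dots> = (\<Sum>a\<in>T. \<Sum>j\<in>{j \<in> {j \<in> S. f j \<in> T}. f j = a}. h j)"
      by (intro sum.cong) auto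
    also have "\<dots> = (\<Sum>j\<in>{j \<in> S. f j \<in> T}. h j)"
      by (rule sum.group) (use finS finT in auto)
    also have "\<dots> \<le> (\<Sum>j\<in>S. h j)"
      by (rule sum_mono2) (use finS \<tau> in \<open>auto simp: h_def less_imp_le\<close>)
    also have "\<dots> = (\<Sum>j\<in>S. Re (cnj (y j) * y j / of_real (\<tau> j)))"
      by (simp only: h_def Re_cnj_mult_div_of_real)
    also have "\<dots> = Re (cinner v (?H *\<^sub>v v))"
      by (simp only: cinner_weighted_ketbra_sum[OF finS x v] Re_sum y_def)
    finally show ?thesis .
  qed
  then show ?thesis
    using hermitian_mat_minus[OF H G]
    by (simp add: loewner_ge_def psd_mat_def cinner_minus_mat[of ?H n ?G])
qed

lemma sum_lessThan_mult_div_mod: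
  fixes d :: nat and f :: "nat \<Rightarrow> nat \<Rightarrow> 'x :: comm_monoid_add"
  shows "(\<Sum>k<d * d. f (k div d) (k mod d)) = (\<Sum>a<d. \<Sum>b<d. f a b)"
proof -
  have lt: "a * d + b < d * d" if "a < d" "b < d" for a b :: nat
  proof -
    have "a * d + b < Suc a * d" using that by simp
    also have "\<dots> \<le> d * d" using that by (intro mult_le_mono1) simp
    finally show ?thesis .
  qed
  have "(\<Sum>k<d * d. f (k div d) (k mod d)) = (\<Sum>(a, b)\<in>{..<d} \<times> {..<d}. f a b)"
  proof (rule sum.reindex_bij_witness[where j = "\<lambda>k. (k div d, k mod d)" and i = "\<lambda>(a, b). a * d + b"])
    fix k assume k: "k \<in> {..<d * d}"
    then show "(case (k div d, k mod d) of (a, b) \<Rightarrow> a * d + b) = k" by simp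
    show "(k div d, k mod d) \<in> {..<d} \<times> {..<d}" using k
      by (cases "d = 0") (auto simp: less_mult_imp_div_less)
    show "(case (k div d, k mod d) of (a, b) \<Rightarrow> f a b) = f (k div d) (k mod d)" by simp
  next
    fix x assume "x \<in> {..<d} \<times> {..<d}"
    then obtain a b where ab: "x = (a, b)" "a < d" "b < d" by auto
    then show "(case x of (a, b) \<Rightarrow> a * d + b) \<in> {..<d * d}" using lt by auto
    show "((case x of (a, b) \<Rightarrow> a * d + b) div d, (case x of (a, b) \<Rightarrow> a * d + b) mod d) = x"
      using ab by simp
  qed
  then show ?thesis by (simp add: sum.cartesian_product)
qed

lemma vectorize_carrier[simp]: "vectorize d P \<in> carrier_vec (d * d)"
  by (simp add: vectorize_def)

lemma cinner_vectorize_self: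
  "cinner (vectorize d P) (vectorize d P) = of_real (\<Sum>a<d. \<Sum>b<d. (cmod (P $$ (a, b)))\<^sup>2)"
proof -
  have "cinner (vectorize d P) (vectorize d P) = (\<Sum>k<d * d. cnj (P $$ (k div d, k mod d)) * P $$ (k div d, k mod d))"
    by (simp add: cinner_def vectorize_def)
  also have "\<dots> = (\<Sum>a<d. \<Sum>b<d. cnj (P $$ (a, b)) * P $$ (a, b))"
    by (rule sum_lessThan_mult_div_mod[where f = "\<lambda>a b. cnj (P $$ (a, b)) * P $$ (a, b)"])
  also have "\<dots> = (\<Sum>a<d. \<Sum>b<d. of_real ((cmod (P $$ (a, b)))\<^sup>2))"
    by (intro sum.cong refl) (metis complex_norm_square mult.commute)
  finally show ?thesis by (simp only: of_real_sum)
qed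

lemma psd_mat_hs_norm_div_trace_le:
  assumes psd: "psd_mat d B" and tr: "mtrace B \<noteq> 0"
  shows "Re (cinner (vectorize d B) (vectorize d B) / mtrace B) \<le> Re (mtrace B)"
proof -
  define \<tau> where "\<tau> = Re (mtrace B)"
  have t: "mtrace B = of_real \<tau>" unfolding \<tau>_def by (rule psd_mat_trace(1)[OF psd])
  have "0 \<le> \<tau>" unfolding \<tau>_def by (rule psd_mat_trace(2)[OF psd])
  moreover have "\<tau> \<noteq> 0" using tr t by auto
  ultimately have \<tau>_pos: "0 < \<tau>" by simp
  have "Re (cinner (vectorize d B) (vectorize d B) / mtrace B) = (\<Sum>a<d. \<Sum>b<d. (cmod (B $$ (a, b)))\<^sup>2) / \<tau>"
    by (simp add: cinner_vectorize_self t flip: of_real_divide)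
  also have "\<dots> \<le> \<tau>\<^sup>2 / \<tau>"
    using psd_mat_frobenius_le[OF psd] \<tau>_pos by (intro divide_right_mono) (auto simp: \<tau>_def)
  also have "\<dots> = Re (mtrace B)" by (simp add: power2_eq_square \<tau>_def)
  finally show ?thesis .
qed

lemma G_mat_eq_weighted_ketbra_sum:
  "G_mat d \<Psi> e = weighted_ketbra_sum (d * d) {i. i < d \<and> mtrace (hs_adjoint d \<Psi> (ketbra (e i) (e i))) \<noteq> 0}
     (\<lambda>i. vectorize d (hs_adjoint d \<Psi> (ketbra (e i) (e i)))) (\<lambda>i. mtrace (hs_adjoint d \<Psi> (ketbra (e i) (e i))))"
  by (simp add: G_mat_def weighted_ketbra_sum_def Let_def)

section \<open>The feasible point built from a joint channel\<close>

definition effect_support :: "nat \<Rightarrow> nat \<Rightarrow> (nat \<Rightarrow> nat \<Rightarrow> complex vec) \<Rightarrow> (complex mat \<Rightarrow> complex mat) \<Rightarrow> (nat \<Rightarrow> nat) set" where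
  "effect_support d N e \<Lambda> = {j \<in> PiE {..<N} (\<lambda>_. {..<d}). mtrace (product_effect d N e \<Lambda> j) \<noteq> 0}"

text \<open>As in \<^const>\<open>G_mat\<close>, terms of trace zero are dropped; for the positive operators
  \<^const>\<open>product_effect\<close> these terms are zero anyway.\<close>
definition compatibility_witness :: "nat \<Rightarrow> nat \<Rightarrow> (nat \<Rightarrow> nat \<Rightarrow> complex vec) \<Rightarrow> (complex mat \<Rightarrow> complex mat) \<Rightarrow> complex mat" where
  "compatibility_witness d N e \<Lambda> = weighted_ketbra_sum (d * d) (effect_support d N e \<Lambda>)
     (\<lambda>j. vectorize d (product_effect d N e \<Lambda> j)) (\<lambda>j. mtrace (product_effect d N e \<Lambda> j))"

lemma finite_effect_support: "finite (effect_support d N e \<Lambda>)"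
  by (rule finite_subset[of _ "PiE {..<N} (\<lambda>_. {..<d})"]) (auto simp: effect_support_def finite_PiE)

lemma mtrace_product_effect:
  assumes "quantum_channel d (d ^ N) \<Lambda>"
  shows "mtrace (product_effect d N e \<Lambda> j) = of_real (Re (mtrace (product_effect d N e \<Lambda> j)))"
    "0 \<le> Re (mtrace (product_effect d N e \<Lambda> j))"
  using psd_mat_trace[OF psd_product_effect[OF assms]] by auto

lemma hermitian_compatibility_witness:
  assumes "quantum_channel d (d ^ N) \<Lambda>"
  shows "hermitian_mat (d * d) (compatibility_witness d N e \<Lambda>)"
  unfolding compatibility_witness_def
proof (rule hermitian_weighted_ketbra_sum)
  show "Im (mtrace (product_effect d N e \<Lambda> j)) = 0" for j
    by (subst mtrace_product_effect(1)[OF assms]) simp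
qed simp

lemma mtrace_compatibility_witness_le:
  assumes d: "0 < d" and onb: "\<forall>i<N. orthonormal_basis d (e i)" and N: "0 < N"
    and ch: "quantum_channel d (d ^ N) \<Lambda>" and ch0: "quantum_channel d d \<Psi>"
    and marg: "\<forall>X\<in>carrier_mat d d. \<Psi> X = ptrace_keep d N 0 (\<Lambda> X)"
  shows "Re (mtrace (compatibility_witness d N e \<Lambda>)) \<le> real d"
proof -
  let ?B = "product_effect d N e \<Lambda>" and ?S = "effect_support d N e \<Lambda>"
  let ?JJ = "PiE {..<N} (\<lambda>_. {..<d})"
  have lin: "linear_op_map d (d ^ N) \<Lambda>" using ch by (simp add: quantum_channel_def)
  have "Re (mtrace (compatibility_witness d N e \<Lambda>))
      = (\<Sum>j\<in>?S. Re (cinner (vectorize d (?B j)) (vectorize d (?B j)) / mtrace (?B j)))"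
    unfolding compatibility_witness_def by (simp add: mtrace_weighted_ketbra_sum Re_sum)
  also have "\<dots> \<le> (\<Sum>j\<in>?S. Re (mtrace (?B j)))"
    by (rule sum_mono, rule psd_mat_hs_norm_div_trace_le[OF psd_product_effect[OF ch]])
      (simp add: effect_support_def)
  also have "\<dots> \<le> (\<Sum>j\<in>?JJ. Re (mtrace (?B j)))"
    by (rule sum_mono2) (auto simp: finite_PiE effect_support_def mtrace_product_effect(2)[OF ch])
  also have "\<dots> = Re (\<Sum>j\<in>?JJ. mtrace (?B j))" by (simp add: Re_sum)
  also have "(\<Sum>j\<in>?JJ. mtrace (?B j)) = of_nat d"
    by (rule sum_mtrace_product_effect[OF d onb N lin ch0 marg])
  finally show ?thesis by simp
qed

lemma hs_adjoint_marginal_ketbra_support: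
  assumes d: "0 < d" and onb: "\<forall>i<N. orthonormal_basis d (e i)" and k: "k < N"
    and ch: "quantum_channel d (d ^ N) \<Lambda>"
    and marg: "\<forall>X\<in>carrier_mat d d. \<Psi> X = ptrace_keep d N k (\<Lambda> X)"
    and ars: "a < d" "r < d" "s < d"
  shows "hs_adjoint d \<Psi> (ketbra (e k a) (e k a)) $$ (r, s)
    = (\<Sum>j\<in>{j \<in> effect_support d N e \<Lambda>. j k = a}. product_effect d N e \<Lambda> j $$ (r, s))"
proof -
  let ?JJ = "PiE {..<N} (\<lambda>_. {..<d})" and ?S = "effect_support d N e \<Lambda>"
  have lin: "linear_op_map d (d ^ N) \<Lambda>" using ch by (simp add: quantum_channel_def)
  have zero: "product_effect d N e \<Lambda> j $$ (r, s) = 0" if "j \<in> ?JJ" "j \<notin> ?S" for j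
    using psd_mat_trace_zero[OF psd_product_effect[OF ch]] that ars by (auto simp: effect_support_def)
  have "hs_adjoint d \<Psi> (ketbra (e k a) (e k a)) $$ (r, s)
      = (\<Sum>j\<in>{j \<in> ?JJ. j k = a}. product_effect d N e \<Lambda> j $$ (r, s))"
    by (rule hs_adjoint_marginal_ketbra[OF d onb k ars lin marg])
  also have "\<dots> = (\<Sum>j\<in>{j \<in> ?S. j k = a}. product_effect d N e \<Lambda> j $$ (r, s))"
    by (rule sum.mono_neutral_right) (use zero in \<open>auto simp: finite_PiE effect_support_def\<close>)
  finally show ?thesis .
qed

lemma mtrace_hs_adjoint_marginal_ketbra:
  assumes d: "0 < d" and onb: "\<forall>i<N. orthonormal_basis d (e i)" and k: "k < N"
    and ch: "quantum_channel d (d ^ N) \<Lambda>"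
    and marg: "\<forall>X\<in>carrier_mat d d. \<Psi> X = ptrace_keep d N k (\<Lambda> X)" and a: "a < d"
  shows "mtrace (hs_adjoint d \<Psi> (ketbra (e k a) (e k a)))
    = of_real (\<Sum>j\<in>{j \<in> effect_support d N e \<Lambda>. j k = a}. Re (mtrace (product_effect d N e \<Lambda> j)))"
proof -
  let ?S = "{j \<in> effect_support d N e \<Lambda>. j k = a}" and ?B = "product_effect d N e \<Lambda>"
  have "mtrace (hs_adjoint d \<Psi> (ketbra (e k a) (e k a))) = (\<Sum>r<d. \<Sum>j\<in>?S. ?B j $$ (r, r))"
    by (simp add: mtrace_carrier[OF hs_adjoint_carrier]
        hs_adjoint_marginal_ketbra_support[OF d onb k ch marg a])
  also have "\<dots> = (\<Sum>j\<in>?S. \<Sum>r<d. ?B j $$ (r, r))"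
    by (rule sum.swap)
  also have "\<dots> = (\<Sum>j\<in>?S. mtrace (?B j))"
    by (simp add: product_effect_def mtrace_carrier[OF hs_adjoint_carrier])
  also have "\<dots> = (\<Sum>j\<in>?S. of_real (Re (mtrace (?B j))))"
    by (rule sum.cong[OF refl]) (rule mtrace_product_effect(1)[OF ch])
  finally show ?thesis by simp
qed

lemma loewner_ge_compatibility_witness:
  assumes d: "0 < d" and onb: "\<forall>i<N. orthonormal_basis d (e i)" and k: "k < N"
    and ch: "quantum_channel d (d ^ N) \<Lambda>"
    and marg: "\<forall>X\<in>carrier_mat d d. \<Psi> X = ptrace_keep d N k (\<Lambda> X)"
  shows "loewner_ge (d * d) (compatibility_witness d N e \<Lambda>) (G_mat d \<Psi> (e k))"
proof -
  define B where "B = product_effect d N e \<Lambda>"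
  define \<tau> where "\<tau> j = Re (mtrace (B j))" for j
  define A where "A a = hs_adjoint d \<Psi> (ketbra (e k a) (e k a))" for a
  have W: "compatibility_witness d N e \<Lambda>
      = weighted_ketbra_sum (d * d) (effect_support d N e \<Lambda>) (\<lambda>j. vectorize d (B j)) (\<lambda>j. of_real (\<tau> j))"
    unfolding compatibility_witness_def B_def \<tau>_def by (subst mtrace_product_effect(1)[OF ch]) (rule refl)
  have G: "G_mat d \<Psi> (e k)
      = weighted_ketbra_sum (d * d) {a. a < d \<and> mtrace (A a) \<noteq> 0} (\<lambda>a. vectorize d (A a)) (\<lambda>a. mtrace (A a))"
    by (simp add: G_mat_eq_weighted_ketbra_sum A_def)
  show ?thesis
    unfolding W G
  proof (rule loewner_ge_weighted_ketbra_sum_merge[where f = "\<lambda>j. j k"])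
    show "0 < \<tau> j" if "j \<in> effect_support d N e \<Lambda>" for j
      using that mtrace_product_effect[OF ch, of e j] unfolding \<tau>_def B_def effect_support_def
      by (metis (mono_tags, lifting) mem_Collect_eq of_real_0 order_le_less)
    show "vectorize d (A a) $ p = (\<Sum>j\<in>{j \<in> effect_support d N e \<Lambda>. j k = a}. vectorize d (B j) $ p)"
      if "a \<in> {a. a < d \<and> mtrace (A a) \<noteq> 0}" "p < d * d" for a p
    proof -
      have "a < d" "p div d < d" "p mod d < d" using that d by (auto simp: less_mult_imp_div_less)
      then show ?thesis
        using that(2) by (simp add: vectorize_def A_def B_def hs_adjoint_marginal_ketbra_support[OF d onb k ch marg])
    qed
    show "mtrace (A a) = of_real (\<Sum>j\<in>{j \<in> effect_support d N e \<Lambda>. j k = a}. \<tau> j)"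
      if "a \<in> {a. a < d \<and> mtrace (A a) \<noteq> 0}" for a
      using that by (simp add: A_def \<tau>_def B_def mtrace_hs_adjoint_marginal_ketbra[OF d onb k ch marg])
  qed (simp_all add: finite_effect_support)
qed

theorem theorem4p7:
  fixes d N :: nat
    and \<Phi> :: "nat \<Rightarrow> complex mat \<Rightarrow> complex mat"
    and e :: "nat \<Rightarrow> nat \<Rightarrow> complex vec"
  assumes "d \<ge> 1"
    and "\<forall>i < N. quantum_channel d d (\<Phi> i)"
    and "\<forall>i < N. orthonormal_basis d (e i)"
    and "\<exists>c > real d. \<forall>H. hermitian_mat (d * d) H \<and>
              (\<forall>i < N. loewner_ge (d * d) H (G_mat d (\<Phi> i) (e i)))
              \<longrightarrow> c \<le> Re (mtrace H)"
  shows "\<not> compatible d N \<Phi>"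
proof
  assume "compatible d N \<Phi>"
  then obtain \<Lambda> where ch: "quantum_channel d (d ^ N) \<Lambda>"
    and marg: "\<forall>i<N. \<forall>X\<in>carrier_mat d d. \<Phi> i X = ptrace_keep d N i (\<Lambda> X)"
    by (auto simp: compatible_def)
  obtain c where c: "c > real d" and bound: "\<forall>H. hermitian_mat (d * d) H \<and>
      (\<forall>i < N. loewner_ge (d * d) H (G_mat d (\<Phi> i) (e i))) \<longrightarrow> c \<le> Re (mtrace H)"
    using assms(4) by blast
  have d: "0 < d" using assms(1) by simp
  show False
  proof (cases "N = 0")
    case True
    have "hermitian_mat (d * d) (0\<^sub>m (d * d) (d * d))"
      by (auto simp: hermitian_mat_def cadj_def intro!: eq_matI)
    then have "c \<le> Re (mtrace (0\<^sub>m (d * d) (d * d)))" using bound True by auto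
    then show False using c by (simp add: mtrace_def)
  next
    case False
    let ?H = "compatibility_witness d N e \<Lambda>"
    have "\<forall>i<N. loewner_ge (d * d) ?H (G_mat d (\<Phi> i) (e i))"
      using loewner_ge_compatibility_witness[OF d assms(3) _ ch] marg by blast
    then have "c \<le> Re (mtrace ?H)" using bound hermitian_compatibility_witness[OF ch] by blast
    moreover have "Re (mtrace ?H) \<le> real d"
      by (rule mtrace_compatibility_witness_le[OF d assms(3) _ ch]) (use assms(2) marg False in auto)
    ultimately show False using c by simp
  qed
qed

end
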